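(* Let $(Q,M)$ be a two-dimensional random vector with $M\in\{-1,1\}$ almost surely and $M$ not almost surely constant (equivalently $E\ln|M|=0$, $E|M|=1$, $M$ non-degenerate), and suppose $EQ^2<\infty$. Let $(Q_n,M_n)_{n\ge1}$ be i.i.d. copies of $(Q,M)$ and define $R_0=0$, $R_n=Q_n+M_nR_{n-1}$ for $n\ge1$. Then, as $n\to\infty$, $$\frac{R_n}{\sqrt n}\xrightarrow{d}\beta\mathcal N,$$ where $\beta^2=EQ^2+2\frac{EQ}{1-EM}E(QM)$ and $\mathcal N$ is a standard normal random variable.
   Context: $\xrightarrow{d}$ denotes convergence in distribution. Note $-1<EM<1$ under the assumptions. *)

theory Defs
  imports "HOL-Probability.Probability"
begin

text \<open>Random coefficient recursion: R 0 = 0, R (n+1) = Q (n+1) + M (n+1) * R n.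
  The i.i.d. copies are indexed by positive naturals (index 0 is unused).\<close>
fun perp_R :: "(nat \<Rightarrow> 'a \<Rightarrow> real) \<Rightarrow> (nat \<Rightarrow> 'a \<Rightarrow> real) \<Rightarrow> nat \<Rightarrow> 'a \<Rightarrow> real" where
  "perp_R Qs Ms 0 x = 0"
| "perp_R Qs Ms (Suc n) x = Qs (Suc n) x + Ms (Suc n) x * perp_R Qs Ms n x"

definition scaled_std_normal :: "real \<Rightarrow> real measure" where
  "scaled_std_normal \<beta> = distr (density lborel std_normal_density) borel (\<lambda>x. \<beta> * x)"

end

theory Submission
  imports Defs
begin

text \<open>With \<open>c = E Q / (1 - E M)\<close> the steps \<open>W\<^sub>k = Q\<^sub>k - c (1 - M\<^sub>k)\<close> are centred, and
  \<open>R\<^sub>n = c (1 - M\<^sub>1 \<cdots> M\<^sub>n) + \<Sum>\<^sub>k W\<^sub>k M\<^sub>k\<^sub>+\<^sub>1 \<cdots> M\<^sub>n\<close>, where the first term is bounded by \<open>2 \<bar>c\<bar>\<close>.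
  The summands are not independent, but \<open>W\<^sub>k\<close> is independent of the sign \<open>M\<^sub>k\<^sub>+\<^sub>1 \<cdots> M\<^sub>n\<close> and of
  the later summands, and since that sign is \<open>\<plusminus>1\<close>, peeling off the summands one at a time
  multiplies the characteristic function by a mixture of \<open>\<phi>\<^sub>W(s)\<close> and \<open>\<phi>\<^sub>W(-s)\<close>. Both are
  \<open>1 - s\<^sup>2 E W\<^sup>2 / 2\<close> up to the usual second-order error, so the characteristic function of
  \<open>R\<^sub>n / \<surd>n\<close> behaves as in the classical central limit theorem. Finally
  \<open>E W\<^sup>2 = \<beta>\<^sup>2\<close> because \<open>M\<^sup>2 = 1\<close>.\<close>

lemma norm_iexp_diff_le: "norm (iexp a - iexp b) \<le> \<bar>a - b\<bar>"
proof -
  have "iexp a - iexp b = iexp b * (iexp (a - b) - 1)"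
    by (simp add: algebra_simps exp_add[symmetric])
  then have "norm (iexp a - iexp b) = norm (iexp (a - b) - 1)"
    by (simp add: norm_mult)
  also have "\<dots> \<le> \<bar>a - b\<bar>"
    using iexp_approx1[of "a - b" 0] by simp
  finally show ?thesis .
qed

lemma (in prob_space) norm_char_diff_le:
  assumes [measurable]: "X \<in> borel_measurable M" "Y \<in> borel_measurable M"
    and close: "AE \<omega> in M. \<bar>X \<omega> - Y \<omega>\<bar> \<le> B"
  shows "norm ((\<integral>\<omega>. iexp (s * X \<omega>) \<partial>M) - (\<integral>\<omega>. iexp (s * Y \<omega>) \<partial>M)) \<le> \<bar>s\<bar> * B"
proof -
  have int: "integrable M (\<lambda>\<omega>. iexp (s * X \<omega>))" "integrable M (\<lambda>\<omega>. iexp (s * Y \<omega>))"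
    by (intro integrable_iexp; simp)+
  have "norm ((\<integral>\<omega>. iexp (s * X \<omega>) \<partial>M) - (\<integral>\<omega>. iexp (s * Y \<omega>) \<partial>M))
      = norm (\<integral>\<omega>. iexp (s * X \<omega>) - iexp (s * Y \<omega>) \<partial>M)"
    using int by simp
  also have "\<dots> \<le> (\<integral>\<omega>. norm (iexp (s * X \<omega>) - iexp (s * Y \<omega>)) \<partial>M)"
    by (rule integral_norm_bound)
  also have "\<dots> \<le> (\<integral>\<omega>. \<bar>s\<bar> * B \<partial>M)"
  proof (rule integral_mono_AE)
    show "AE \<omega> in M. norm (iexp (s * X \<omega>) - iexp (s * Y \<omega>)) \<le> \<bar>s\<bar> * B"
      using close
    proof eventually_elim
      case (elim \<omega>)
      have "norm (iexp (s * X \<omega>) - iexp (s * Y \<omega>)) \<le> \<bar>s\<bar> * \<bar>X \<omega> - Y \<omega>\<bar>"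
        using norm_iexp_diff_le[of "s * X \<omega>" "s * Y \<omega>"] by (simp add: abs_mult flip: right_diff_distrib)
      also have "\<dots> \<le> \<bar>s\<bar> * B" using elim by (simp add: mult_left_mono)
      finally show ?case .
    qed
  qed (use int in auto)
  finally show ?thesis by (simp add: prob_space)
qed

lemma (in prob_space) AE_prod_sign:
  assumes "finite I" and "\<And>i. i \<in> I \<Longrightarrow> AE \<omega> in M. Y i \<omega> = 1 \<or> Y i \<omega> = -1"
  shows "AE \<omega> in M. (\<Prod>i\<in>I. Y i \<omega>) = 1 \<or> (\<Prod>i\<in>I. Y i \<omega>) = (-1 :: real)"
proof -
  have "AE \<omega> in M. \<forall>i\<in>I. Y i \<omega> = 1 \<or> Y i \<omega> = -1"
    using assms by (intro eventually_ball_finite) auto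
  then show ?thesis
  proof eventually_elim
    case (elim \<omega>)
    from \<open>finite I\<close> this show ?case by (induction I rule: finite_induct) auto
  qed
qed

lemma integral_eq_of_distr_eq:
  fixes g :: "'b \<Rightarrow> 'c :: {banach, second_countable_topology}"
  assumes "distr M N X = distr M N Y" "X \<in> measurable M N" "Y \<in> measurable M N"
    and "g \<in> borel_measurable N"
  shows "(\<integral>\<omega>. g (X \<omega>) \<partial>M) = (\<integral>\<omega>. g (Y \<omega>) \<partial>M)"
  using integral_distr[OF assms(2,4)] integral_distr[OF assms(3,4)] assms(1) by simp

lemma AE_of_distr_eq:
  assumes "distr M N X = distr M N Y" "X \<in> measurable M N" "Y \<in> measurable M N"
    and "{x \<in> space N. P x} \<in> sets N" and "AE \<omega> in M. P (Y \<omega>)"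
  shows "AE \<omega> in M. P (X \<omega>)"
proof -
  have "AE z in distr M N Y. P z"
    using AE_distr_iff[OF assms(3,4)] assms(5) by simp
  then have "AE z in distr M N X. P z"
    unfolding assms(1) .
  then show ?thesis
    using AE_distr_iff[OF assms(2,4)] by simp
qed

text \<open>The weights are \<open>a = E[1\<^bsub>U=1\<^esub> e\<^sup>i\<^sup>s\<^sup>V]\<close> and \<open>b = E[1\<^bsub>U=-1\<^esub> e\<^sup>i\<^sup>s\<^sup>V]\<close>.\<close>
lemma (in prob_space) char_sign_mixture:
  fixes Z :: "'a \<Rightarrow> real \<times> real" and U V :: "'a \<Rightarrow> real"
  assumes indep: "indep_var (borel \<Otimes>\<^sub>M borel) Z (borel \<Otimes>\<^sub>M borel) (\<lambda>\<omega>. (U \<omega>, V \<omega>))"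
    and [measurable]: "h \<in> borel_measurable (borel \<Otimes>\<^sub>M borel)"
    and sign: "AE \<omega> in M. U \<omega> = 1 \<or> U \<omega> = -1"
  obtains a b :: complex
  where "(\<integral>\<omega>. iexp (s * (U \<omega> * h (Z \<omega>) + V \<omega>)) \<partial>M)
      = (\<integral>\<omega>. iexp (s * h (Z \<omega>)) \<partial>M) * a + (\<integral>\<omega>. iexp (- s * h (Z \<omega>)) \<partial>M) * b"
    and "(\<integral>\<omega>. iexp (s * V \<omega>) \<partial>M) = a + b"
    and "norm a + norm b \<le> 1"
proof -
  have [measurable]: "Z \<in> measurable M (borel \<Otimes>\<^sub>M borel)" using indep_var_rv1[OF indep] .
  have UV: "(\<lambda>\<omega>. (U \<omega>, V \<omega>)) \<in> measurable M (borel \<Otimes>\<^sub>M borel)" using indep_var_rv2[OF indep] .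
  have [measurable]: "U \<in> borel_measurable M" "V \<in> borel_measurable M"
    using measurable_compose[OF UV measurable_fst] measurable_compose[OF UV measurable_snd] by simp_all
  define A where "A \<omega> = complex_of_real ((1 + U \<omega>) / 2) * iexp (s * V \<omega>)" for \<omega>
  define B where "B \<omega> = complex_of_real ((1 - U \<omega>) / 2) * iexp (s * V \<omega>)" for \<omega>
  have [measurable]: "A \<in> borel_measurable M" "B \<in> borel_measurable M"
    unfolding A_def B_def by measurable
  have bounded: "AE \<omega> in M. norm (A \<omega>) = (1 + U \<omega>) / 2 \<and> norm (B \<omega>) = (1 - U \<omega>) / 2"
    using sign by eventually_elim (auto simp: A_def B_def norm_mult)
  have "AE \<omega> in M. norm (A \<omega>) \<le> 1 \<and> norm (B \<omega>) \<le> 1"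
    using bounded sign by eventually_elim auto
  then have int_A: "integrable M A" and int_B: "integrable M B"
    by (auto intro!: integrable_const_bound[where B=1] elim: eventually_mono)
  have indep_A: "indep_var borel (\<lambda>\<omega>. iexp (s * h (Z \<omega>))) borel A"
    using indep_var_compose[OF indep, of "\<lambda>z. iexp (s * h z)" borel
        "\<lambda>z. complex_of_real ((1 + fst z) / 2) * iexp (s * snd z)" borel]
    by (simp add: comp_def A_def[abs_def])
  have indep_B: "indep_var borel (\<lambda>\<omega>. iexp (- s * h (Z \<omega>))) borel B"
    using indep_var_compose[OF indep, of "\<lambda>z. iexp (- s * h z)" borel
        "\<lambda>z. complex_of_real ((1 - fst z) / 2) * iexp (s * snd z)" borel]
    by (simp add: comp_def B_def[abs_def])
  have int_W: "integrable M (\<lambda>\<omega>. iexp (u * h (Z \<omega>)))" for u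
    by (intro integrable_iexp) auto
  have "(\<integral>\<omega>. iexp (s * (U \<omega> * h (Z \<omega>) + V \<omega>)) \<partial>M)
      = (\<integral>\<omega>. iexp (s * h (Z \<omega>)) * A \<omega> + iexp (- s * h (Z \<omega>)) * B \<omega> \<partial>M)"
    by (rule integral_cong_AE)
       (use sign in \<open>auto elim!: eventually_mono simp: A_def B_def algebra_simps exp_add[symmetric]\<close>)
  also have "\<dots> = (\<integral>\<omega>. iexp (s * h (Z \<omega>)) \<partial>M) * integral\<^sup>L M A
      + (\<integral>\<omega>. iexp (- s * h (Z \<omega>)) \<partial>M) * integral\<^sup>L M B"
    using indep_var_integrable[OF indep_A int_W int_A] indep_var_integrable[OF indep_B int_W int_B]
      indep_var_lebesgue_integral[OF indep_A int_W int_A] indep_var_lebesgue_integral[OF indep_B int_W int_B]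
    by (subst Bochner_Integration.integral_add) auto
  finally have mixture: "(\<integral>\<omega>. iexp (s * (U \<omega> * h (Z \<omega>) + V \<omega>)) \<partial>M) = \<dots>" .
  have "A \<omega> + B \<omega> = iexp (s * V \<omega>)" for \<omega>
  proof -
    have "(1 + U \<omega>) / 2 + (1 - U \<omega>) / 2 = (1 :: real)" by (simp add: field_simps)
    then show ?thesis unfolding A_def B_def by (metis distrib_right mult_1 of_real_1 of_real_add)
  qed
  then have split: "(\<integral>\<omega>. iexp (s * V \<omega>) \<partial>M) = integral\<^sup>L M A + integral\<^sup>L M B"
    by (subst Bochner_Integration.integral_add[OF int_A int_B, symmetric]) simp
  have "norm (integral\<^sup>L M A) + norm (integral\<^sup>L M B) \<le> (\<integral>\<omega>. norm (A \<omega>) \<partial>M) + (\<integral>\<omega>. norm (B \<omega>) \<partial>M)"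
    by (intro add_mono integral_norm_bound)
  also have "\<dots> = (\<integral>\<omega>. norm (A \<omega>) + norm (B \<omega>) \<partial>M)"
    using int_A int_B by simp
  also have "\<dots> = (\<integral>\<omega>. 1 \<partial>M)"
    by (rule integral_cong_AE) (use bounded in \<open>auto elim: eventually_mono\<close>)
  finally have "norm (integral\<^sup>L M A) + norm (integral\<^sup>L M B) \<le> 1"
    by (simp add: prob_space)
  with mixture split show thesis
    by (rule that)
qed

lemma (in prob_space) norm_char_sign_mixture_le:
  fixes Z :: "'a \<Rightarrow> real \<times> real" and U V :: "'a \<Rightarrow> real"
  assumes indep: "indep_var (borel \<Otimes>\<^sub>M borel) Z (borel \<Otimes>\<^sub>M borel) (\<lambda>\<omega>. (U \<omega>, V \<omega>))"
    and "h \<in> borel_measurable (borel \<Otimes>\<^sub>M borel)"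
    and sign: "AE \<omega> in M. U \<omega> = 1 \<or> U \<omega> = -1"
    and approx_pos: "norm ((\<integral>\<omega>. iexp (s * h (Z \<omega>)) \<partial>M) - \<psi>) \<le> e"
    and approx_neg: "norm ((\<integral>\<omega>. iexp (- s * h (Z \<omega>)) \<partial>M) - \<psi>) \<le> e"
  shows "norm ((\<integral>\<omega>. iexp (s * (U \<omega> * h (Z \<omega>) + V \<omega>)) \<partial>M) - \<psi> * (\<integral>\<omega>. iexp (s * V \<omega>) \<partial>M))
    \<le> e"
proof -
  obtain a b where mixture: "(\<integral>\<omega>. iexp (s * (U \<omega> * h (Z \<omega>) + V \<omega>)) \<partial>M)
      = (\<integral>\<omega>. iexp (s * h (Z \<omega>)) \<partial>M) * a + (\<integral>\<omega>. iexp (- s * h (Z \<omega>)) \<partial>M) * b"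
    and split: "(\<integral>\<omega>. iexp (s * V \<omega>) \<partial>M) = a + b" and weights: "norm a + norm b \<le> 1"
    using char_sign_mixture[OF assms(1-3)] by blast
  have e_nonneg: "0 \<le> e"
    using approx_pos norm_ge_zero order.trans by blast
  have "norm ((\<integral>\<omega>. iexp (s * (U \<omega> * h (Z \<omega>) + V \<omega>)) \<partial>M) - \<psi> * (\<integral>\<omega>. iexp (s * V \<omega>) \<partial>M))
      = norm (((\<integral>\<omega>. iexp (s * h (Z \<omega>)) \<partial>M) - \<psi>) * a + ((\<integral>\<omega>. iexp (- s * h (Z \<omega>)) \<partial>M) - \<psi>) * b)"
    unfolding mixture split by (simp add: algebra_simps)
  also have "\<dots> \<le> e * norm a + e * norm b"
    by (intro norm_triangle_le add_mono, unfold norm_mult)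
       (intro mult_right_mono approx_pos approx_neg norm_ge_zero)+
  also have "\<dots> \<le> e"
    using mult_left_mono[OF weights e_nonneg] by (simp add: distrib_left)
  finally show ?thesis .
qed

text \<open>Defined on paths \<open>f i = (Q\<^sub>i, M\<^sub>i)\<close> rather than on sample points, so that independence
  can be applied through restrictions of the path.\<close>
definition tail_sign :: "nat \<Rightarrow> nat \<Rightarrow> (nat \<Rightarrow> real \<times> real) \<Rightarrow> real" where
  "tail_sign n k f = (\<Prod>i\<in>{k<..n}. snd (f i))"

definition tail_sum :: "(real \<times> real \<Rightarrow> real) \<Rightarrow> nat \<Rightarrow> nat \<Rightarrow> (nat \<Rightarrow> real \<times> real) \<Rightarrow> real" where
  "tail_sum h n j f = (\<Sum>k\<in>{j..n}. h (f k) * tail_sign n k f)"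

lemma tail_sum_empty [simp]: "tail_sum h n (Suc n) f = 0"
  by (simp add: tail_sum_def)

lemma tail_sum_head:
  "j \<le> n \<Longrightarrow> tail_sum h n j f = tail_sign n j f * h (f j) + tail_sum h n (Suc j) f"
  by (simp add: tail_sum_def sum.atLeast_Suc_atMost)

lemma tail_sum_Suc:
  assumes "j \<le> Suc n"
  shows "tail_sum h (Suc n) j f = h (f (Suc n)) + snd (f (Suc n)) * tail_sum h n j f"
proof -
  have "tail_sign (Suc n) k f = snd (f (Suc n)) * tail_sign n k f" if "k \<le> n" for k
    using that by (simp add: tail_sign_def flip: atLeastSucAtMost_greaterThanAtMost)
  with assms show ?thesis
    by (simp add: tail_sum_def tail_sign_def sum.nat_ivl_Suc' sum_distrib_left mult.left_commute)
qed

lemma tail_sign_restrict: "{k<..n} \<subseteq> S \<Longrightarrow> tail_sign n k (restrict f S) = tail_sign n k f"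
  unfolding tail_sign_def by (intro prod.cong) auto

lemma tail_sum_restrict:
  assumes "{j..n} \<subseteq> S" shows "tail_sum h n j (restrict f S) = tail_sum h n j f"
proof -
  have "tail_sign n k (restrict f S) = tail_sign n k f" if "k \<in> {j..n}" for k
    using that assms by (intro tail_sign_restrict) auto
  with assms show ?thesis
    unfolding tail_sum_def by (intro sum.cong refl) auto
qed

lemma measurable_tail_sign:
  "{k<..n} \<subseteq> S \<Longrightarrow> tail_sign n k \<in> borel_measurable (PiM S (\<lambda>_. borel \<Otimes>\<^sub>M borel))"
  unfolding tail_sign_def by (intro borel_measurable_prod) auto

lemma measurable_tail_sum:
  assumes [measurable]: "h \<in> borel_measurable (borel \<Otimes>\<^sub>M borel)" and "{j..n} \<subseteq> S"
  shows "tail_sum h n j \<in> borel_measurable (PiM S (\<lambda>_. borel \<Otimes>\<^sub>M borel))"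
  unfolding tail_sum_def using assms(2)
  by (intro borel_measurable_sum borel_measurable_times measurable_tail_sign) auto

lemma (in prob_space) indep_var_head_tail:
  assumes indep: "indep_vars (\<lambda>_. borel \<Otimes>\<^sub>M borel) X {1..}" and "1 \<le> j"
    and [measurable]: "h \<in> borel_measurable (borel \<Otimes>\<^sub>M borel)"
  shows "indep_var (borel \<Otimes>\<^sub>M borel) (X j)
           (borel \<Otimes>\<^sub>M borel) (\<lambda>\<omega>. (tail_sign n j (\<lambda>i. X i \<omega>), tail_sum h n (Suc j) (\<lambda>i. X i \<omega>)))"
proof -
  have "(\<lambda>f. (tail_sign n j f, tail_sum h n (Suc j) f))
      \<in> measurable (PiM {Suc j..n} (\<lambda>_. borel \<Otimes>\<^sub>M borel)) (borel \<Otimes>\<^sub>M borel)"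
    by (intro measurable_Pair measurable_tail_sign measurable_tail_sum) auto
  then have "indep_var (borel \<Otimes>\<^sub>M borel) ((\<lambda>f. f j) \<circ> (\<lambda>\<omega>. restrict (\<lambda>i. X i \<omega>) {j}))
      (borel \<Otimes>\<^sub>M borel) ((\<lambda>f. (tail_sign n j f, tail_sum h n (Suc j) f)) \<circ> (\<lambda>\<omega>. restrict (\<lambda>i. X i \<omega>) {Suc j..n}))"
    using \<open>1 \<le> j\<close> by (intro indep_var_compose[OF indep_var_restrict[OF indep]]) auto
  then show ?thesis
    by (simp add: comp_def tail_sign_restrict tail_sum_restrict atLeastSucAtMost_greaterThanAtMost)
qed

lemma (in prob_space) norm_char_tail_sum_le:
  fixes X :: "nat \<Rightarrow> 'a \<Rightarrow> real \<times> real"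
  assumes indep: "indep_vars (\<lambda>_. borel \<Otimes>\<^sub>M borel) X {1..}"
    and [measurable]: "h \<in> borel_measurable (borel \<Otimes>\<^sub>M borel)"
    and sign: "\<And>i. 1 \<le> i \<Longrightarrow> AE \<omega> in M. snd (X i \<omega>) = 1 \<or> snd (X i \<omega>) = -1"
    and approx_pos: "\<And>i. 1 \<le> i \<Longrightarrow> norm ((\<integral>\<omega>. iexp (s * h (X i \<omega>)) \<partial>M) - \<psi>) \<le> e"
    and approx_neg: "\<And>i. 1 \<le> i \<Longrightarrow> norm ((\<integral>\<omega>. iexp (- s * h (X i \<omega>)) \<partial>M) - \<psi>) \<le> e"
    and "norm \<psi> \<le> 1"
  shows "norm ((\<integral>\<omega>. iexp (s * tail_sum h n 1 (\<lambda>i. X i \<omega>)) \<partial>M) - \<psi> ^ n) \<le> n * e"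
proof -
  let ?E = "\<lambda>j. \<integral>\<omega>. iexp (s * tail_sum h n j (\<lambda>i. X i \<omega>)) \<partial>M"
  have "norm (?E j - \<psi> ^ d) \<le> d * e" if "1 \<le> j" "j + d = Suc n" for j d
    using that
  proof (induction d arbitrary: j)
    case 0
    then show ?case by (simp add: prob_space)
  next
    case (Suc d)
    have IH: "norm (?E (Suc j) - \<psi> ^ d) \<le> d * e"
      using Suc by simp
    have sign_tail: "AE \<omega> in M. tail_sign n j (\<lambda>i. X i \<omega>) = 1 \<or> tail_sign n j (\<lambda>i. X i \<omega>) = -1"
      unfolding tail_sign_def by (rule AE_prod_sign) (use sign Suc.prems in auto)
    have step: "norm (?E j - \<psi> * ?E (Suc j)) \<le> e"
      using norm_char_sign_mixture_le[OF indep_var_head_tail[OF indep Suc.prems(1)] _ sign_tail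
          approx_pos approx_neg] Suc.prems
      by (simp add: tail_sum_head)
    have "norm (?E j - \<psi> ^ Suc d) = norm ((?E j - \<psi> * ?E (Suc j)) + \<psi> * (?E (Suc j) - \<psi> ^ d))"
      by (simp add: algebra_simps)
    also have "\<dots> \<le> norm (?E j - \<psi> * ?E (Suc j)) + norm \<psi> * norm (?E (Suc j) - \<psi> ^ d)"
      by (rule order.trans[OF norm_triangle_ineq]) (simp add: norm_mult)
    also have "\<dots> \<le> e + 1 * (d * e)"
      using step IH \<open>norm \<psi> \<le> 1\<close> by (intro add_mono mult_mono) (auto intro: order.trans[OF norm_ge_zero])
    finally show ?case by (simp add: algebra_simps)
  qed
  then show ?thesis by simp
qed

definition centred_step :: "real \<Rightarrow> real \<times> real \<Rightarrow> real" where
  "centred_step c z = fst z - c * (1 - snd z)"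

lemma measurable_centred_step [measurable]: "centred_step c \<in> borel_measurable (borel \<Otimes>\<^sub>M borel)"
  unfolding centred_step_def by measurable

text \<open>Since \<open>Q\<^sub>k = W\<^sub>k + c (1 - M\<^sub>k)\<close>, the drift part of the perpetuity telescopes.\<close>
lemma perp_R_eq_tail_sum:
  "perp_R Qs Ms n \<omega> = tail_sum (centred_step c) n 1 (\<lambda>i. (Qs i \<omega>, Ms i \<omega>)) + c * (1 - (\<Prod>i\<in>{1..n}. Ms i \<omega>))"
proof (induction n)
  case (Suc n)
  have "(\<Prod>i\<in>{1..Suc n}. Ms i \<omega>) = Ms (Suc n) \<omega> * (\<Prod>i\<in>{1..n}. Ms i \<omega>)"
    by (simp add: prod.nat_ivl_Suc' mult.commute)
  then show ?case
    unfolding perp_R.simps Suc.IH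
    by (simp add: tail_sum_Suc centred_step_def[of c "(_, _)"] algebra_simps)
qed (simp add: tail_sum_def)

lemma measurable_perp_R:
  assumes "\<And>i. 1 \<le> i \<Longrightarrow> Qs i \<in> borel_measurable M" and "\<And>i. 1 \<le> i \<Longrightarrow> Ms i \<in> borel_measurable M"
  shows "perp_R Qs Ms n \<in> borel_measurable M"
proof (induction n)
  case (Suc n)
  have "perp_R Qs Ms (Suc n) = (\<lambda>\<omega>. Qs (Suc n) \<omega> + Ms (Suc n) \<omega> * perp_R Qs Ms n \<omega>)"
    by auto
  with Suc assms show ?case by simp
qed simp

lemma (in prob_space) expectation_sign_ne_1:
  fixes Y :: "'a \<Rightarrow> real"
  assumes [measurable]: "Y \<in> borel_measurable M"
    and sign: "AE \<omega> in M. Y \<omega> = -1 \<or> Y \<omega> = 1" and nonconst: "\<not> (\<exists>c. AE \<omega> in M. Y \<omega> = c)"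
  shows "expectation Y \<noteq> 1"
proof
  assume "expectation Y = 1"
  moreover have int_Y: "integrable M Y"
    by (rule integrable_const_bound[where B=1]) (use sign in \<open>auto elim: eventually_mono\<close>)
  ultimately have "(\<integral>\<omega>. 1 - Y \<omega> \<partial>M) = 0"
    by (simp add: prob_space)
  moreover have "AE \<omega> in M. 0 \<le> 1 - Y \<omega>"
    using sign by eventually_elim auto
  ultimately have "AE \<omega> in M. 1 - Y \<omega> = 0"
    using int_Y by (subst integral_nonneg_eq_0_iff_AE[symmetric]) auto
  then have "AE \<omega> in M. Y \<omega> = 1"
    by eventually_elim simp
  with nonconst show False by blast
qed

lemma (in prob_space) centred_step_moments:
  fixes Q Y :: "'a \<Rightarrow> real"
  assumes [measurable]: "Q \<in> borel_measurable M" "Y \<in> borel_measurable M"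
    and sign: "AE \<omega> in M. Y \<omega> = -1 \<or> Y \<omega> = 1"
    and Q2: "integrable M (\<lambda>\<omega>. (Q \<omega>)\<^sup>2)"
    and "expectation Y \<noteq> 1"
  defines "c \<equiv> expectation Q / (1 - expectation Y)"
  shows "expectation (\<lambda>\<omega>. centred_step c (Q \<omega>, Y \<omega>)) = 0"
    and "integrable M (\<lambda>\<omega>. (centred_step c (Q \<omega>, Y \<omega>))\<^sup>2)"
    and "expectation (\<lambda>\<omega>. (centred_step c (Q \<omega>, Y \<omega>))\<^sup>2)
           = expectation (\<lambda>\<omega>. (Q \<omega>)\<^sup>2) + 2 * expectation Q / (1 - expectation Y) * expectation (\<lambda>\<omega>. Q \<omega> * Y \<omega>)"
proof -
  have c: "c * (1 - expectation Y) = expectation Q"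
    using \<open>expectation Y \<noteq> 1\<close> by (simp add: c_def)
  have int_Q: "integrable M Q"
    using square_integrable_imp_integrable[OF _ Q2] by simp
  have int_Y: "integrable M Y"
    by (rule integrable_const_bound[where B=1]) (use sign in \<open>auto elim: eventually_mono\<close>)
  have int_QY: "integrable M (\<lambda>\<omega>. Q \<omega> * Y \<omega>)"
    by (rule Bochner_Integration.integrable_bound[OF int_Q]) (use sign in \<open>auto elim: eventually_mono\<close>)
  show "expectation (\<lambda>\<omega>. centred_step c (Q \<omega>, Y \<omega>)) = 0"
    using int_Q int_Y c by (simp add: centred_step_def prob_space algebra_simps)
  text \<open>\<open>Y\<^sup>2 = 1\<close> turns the square of the centred step into an affine combination of
    \<open>Q\<^sup>2\<close>, \<open>Q Y\<close>, \<open>Q\<close> and \<open>Y\<close>.\<close>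
  define S where "S \<omega> = (Q \<omega>)\<^sup>2 + 2 * c * (Q \<omega> * Y \<omega>) + 2 * c * (c * (1 - Y \<omega>) - Q \<omega>)" for \<omega>
  have square: "AE \<omega> in M. (centred_step c (Q \<omega>, Y \<omega>))\<^sup>2 = S \<omega>"
    using sign by eventually_elim (auto simp: S_def centred_step_def power2_eq_square algebra_simps)
  have int_S: "integrable M S"
    unfolding S_def using Q2 int_Q int_Y int_QY by simp
  show "integrable M (\<lambda>\<omega>. (centred_step c (Q \<omega>, Y \<omega>))\<^sup>2)"
    by (rule integrable_cong_AE_imp[OF int_S]) (use square in \<open>auto elim: eventually_mono\<close>)
  have "expectation (\<lambda>\<omega>. (centred_step c (Q \<omega>, Y \<omega>))\<^sup>2) = expectation S"
    by (rule integral_cong_AE) (use square borel_measurable_integrable[OF int_S] in simp_all)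
  also have "\<dots> = expectation (\<lambda>\<omega>. (Q \<omega>)\<^sup>2) + 2 * c * expectation (\<lambda>\<omega>. Q \<omega> * Y \<omega>)
      + 2 * c * (c * (1 - expectation Y) - expectation Q)"
    unfolding S_def using Q2 int_Q int_Y int_QY by (simp add: prob_space)
  finally show "expectation (\<lambda>\<omega>. (centred_step c (Q \<omega>, Y \<omega>))\<^sup>2)
      = expectation (\<lambda>\<omega>. (Q \<omega>)\<^sup>2) + 2 * expectation Q / (1 - expectation Y) * expectation (\<lambda>\<omega>. Q \<omega> * Y \<omega>)"
    by (simp add: c c_def)
qed

lemma real_distribution_scaled_std_normal: "real_distribution (scaled_std_normal \<beta>)"
proof -
  interpret real_distribution std_normal_distribution
    by (rule real_dist_normal_dist)
  show ?thesis
    unfolding scaled_std_normal_def by (rule real_distribution_distr) simp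
qed

lemma char_scaled_std_normal: "char (scaled_std_normal \<beta>) t = exp (- (\<beta> * t)\<^sup>2 / 2)"
proof -
  have "char (scaled_std_normal \<beta>) t = char std_normal_distribution (\<beta> * t)"
    unfolding scaled_std_normal_def char_def by (subst integral_distr) (simp_all add: ac_simps)
  then show ?thesis
    by (simp add: char_std_normal_distribution)
qed

lemma (in prob_space) tendsto_expectation_min_cube:
  fixes W :: "'a \<Rightarrow> real"
  assumes [measurable]: "W \<in> borel_measurable M" and "integrable M (\<lambda>\<omega>. (W \<omega>)\<^sup>2)"
    and "\<And>n. 0 \<le> a n" and "a \<longlonglongrightarrow> 0"
  shows "(\<lambda>n. expectation (\<lambda>\<omega>. min (6 * (W \<omega>)\<^sup>2) (a n * \<bar>W \<omega>\<bar> ^ 3))) \<longlonglongrightarrow> 0"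
proof -
  have "(\<lambda>n. min (6 * (W \<omega>)\<^sup>2) (a n * \<bar>W \<omega>\<bar> ^ 3)) \<longlonglongrightarrow> min (6 * (W \<omega>)\<^sup>2) (0 * \<bar>W \<omega>\<bar> ^ 3)"
    for \<omega>
    using \<open>a \<longlonglongrightarrow> 0\<close> by (intro tendsto_intros)
  then have "(\<lambda>n. expectation (\<lambda>\<omega>. min (6 * (W \<omega>)\<^sup>2) (a n * \<bar>W \<omega>\<bar> ^ 3))) \<longlonglongrightarrow> expectation (\<lambda>\<omega>. 0)"
    using assms by (intro integral_dominated_convergence[where w="\<lambda>\<omega>. 6 * (W \<omega>)\<^sup>2"]) auto
  then show ?thesis by simp
qed

lemma (in prob_space) norm_char_second_order_le:
  fixes W :: "'a \<Rightarrow> real"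
  assumes [measurable]: "W \<in> borel_measurable M"
    and W2: "integrable M (\<lambda>\<omega>. (W \<omega>)\<^sup>2)" and W_mean: "expectation W = 0"
  shows "norm ((\<integral>\<omega>. iexp (u * W \<omega>) \<partial>M) - (1 - u\<^sup>2 * expectation (\<lambda>\<omega>. (W \<omega>)\<^sup>2) / 2))
    \<le> u\<^sup>2 / 6 * expectation (\<lambda>\<omega>. min (6 * (W \<omega>)\<^sup>2) (\<bar>u\<bar> * \<bar>W \<omega>\<bar> ^ 3))"
proof -
  have int_W: "integrable M W"
    using square_integrable_imp_integrable[OF _ W2] by simp
  have var_W: "variance W = expectation (\<lambda>\<omega>. (W \<omega>)\<^sup>2)"
    by (simp add: W_mean)
  have "char (distr M borel W) u = (\<integral>\<omega>. iexp (u * W \<omega>) \<partial>M)"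
    by (simp add: char_def integral_distr)
  then show ?thesis
    using char_approx3'[OF _ int_W W2 W_mean var_W refl, where t=u] by simp
qed

text \<open>Identical distribution enters only through the characteristic function of the centred
  steps, which is that of \<open>W\<close>.\<close>
locale signed_perpetuity = prob_space +
  fixes Qs Ms :: "nat \<Rightarrow> 'a \<Rightarrow> real" and c :: real and W :: "'a \<Rightarrow> real"
  assumes indep: "indep_vars (\<lambda>_. borel \<Otimes>\<^sub>M borel) (\<lambda>i \<omega>. (Qs i \<omega>, Ms i \<omega>)) {1..}"
    and sign: "\<And>i. 1 \<le> i \<Longrightarrow> AE \<omega> in M. Ms i \<omega> = 1 \<or> Ms i \<omega> = -1"
    and same_char: "\<And>i u. 1 \<le> i \<Longrightarrow>
      (\<integral>\<omega>. iexp (u * centred_step c (Qs i \<omega>, Ms i \<omega>)) \<partial>M) = (\<integral>\<omega>. iexp (u * W \<omega>) \<partial>M)"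
    and W_measurable [measurable]: "W \<in> borel_measurable M"
    and W_square_integrable: "integrable M (\<lambda>\<omega>. (W \<omega>)\<^sup>2)"
    and W_mean: "expectation W = 0"
begin

lemma measurable_pair_sequence: "1 \<le> i \<Longrightarrow> (\<lambda>\<omega>. (Qs i \<omega>, Ms i \<omega>)) \<in> measurable M (borel \<Otimes>\<^sub>M borel)"
  using indep by (auto simp: indep_vars_def)

lemma measurable_Qs: "1 \<le> i \<Longrightarrow> Qs i \<in> borel_measurable M"
  and measurable_Ms: "1 \<le> i \<Longrightarrow> Ms i \<in> borel_measurable M"
  using measurable_compose[OF measurable_pair_sequence measurable_fst]
    measurable_compose[OF measurable_pair_sequence measurable_snd] by simp_all

lemma measurable_perp_R_sequence [measurable]: "perp_R Qs Ms n \<in> borel_measurable M"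
  using measurable_Qs measurable_Ms by (rule measurable_perp_R)

lemma norm_char_tail_sum_centred_le:
  assumes small: "s\<^sup>2 * expectation (\<lambda>\<omega>. (W \<omega>)\<^sup>2) \<le> 4"
  shows "norm ((\<integral>\<omega>. iexp (s * tail_sum (centred_step c) n 1 (\<lambda>i. (Qs i \<omega>, Ms i \<omega>))) \<partial>M)
      - (1 - s\<^sup>2 * expectation (\<lambda>\<omega>. (W \<omega>)\<^sup>2) / 2) ^ n)
    \<le> n * (s\<^sup>2 / 6 * expectation (\<lambda>\<omega>. min (6 * (W \<omega>)\<^sup>2) (\<bar>s\<bar> * \<bar>W \<omega>\<bar> ^ 3)))"
proof -
  let ?\<psi> = "1 - s\<^sup>2 * expectation (\<lambda>\<omega>. (W \<omega>)\<^sup>2) / 2"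
  let ?e = "s\<^sup>2 / 6 * expectation (\<lambda>\<omega>. min (6 * (W \<omega>)\<^sup>2) (\<bar>s\<bar> * \<bar>W \<omega>\<bar> ^ 3))"
  note approx = norm_char_second_order_le[OF W_measurable W_square_integrable W_mean]
  have "0 \<le> s\<^sup>2 * expectation (\<lambda>\<omega>. (W \<omega>)\<^sup>2)"
    by simp
  then have psi: "norm (complex_of_real ?\<psi>) \<le> 1"
    unfolding norm_of_real abs_le_iff using small by linarith
  have "norm ((\<integral>\<omega>. iexp (s * tail_sum (centred_step c) n 1 (\<lambda>i. (Qs i \<omega>, Ms i \<omega>))) \<partial>M)
      - complex_of_real ?\<psi> ^ n) \<le> n * ?e"
  proof (rule norm_char_tail_sum_le[OF indep measurable_centred_step _ _ _ psi])
    fix i :: nat assume "1 \<le> i"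
    show "AE \<omega> in M. snd (Qs i \<omega>, Ms i \<omega>) = 1 \<or> snd (Qs i \<omega>, Ms i \<omega>) = -1"
      using sign[OF \<open>1 \<le> i\<close>] by simp
    show "norm ((\<integral>\<omega>. iexp (s * centred_step c (Qs i \<omega>, Ms i \<omega>)) \<partial>M) - ?\<psi>) \<le> ?e"
      using approx[of s] same_char[OF \<open>1 \<le> i\<close>] by simp
    show "norm ((\<integral>\<omega>. iexp (- s * centred_step c (Qs i \<omega>, Ms i \<omega>)) \<partial>M) - ?\<psi>) \<le> ?e"
      using approx[of "- s"] same_char[OF \<open>1 \<le> i\<close>, of "- s"] by simp
  qed
  then show ?thesis
    by simp
qed

lemma norm_char_perp_R_le:
  assumes small: "s\<^sup>2 * expectation (\<lambda>\<omega>. (W \<omega>)\<^sup>2) \<le> 4"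
  shows "norm ((\<integral>\<omega>. iexp (s * perp_R Qs Ms n \<omega>) \<partial>M) - (1 - s\<^sup>2 * expectation (\<lambda>\<omega>. (W \<omega>)\<^sup>2) / 2) ^ n)
    \<le> 2 * \<bar>c\<bar> * \<bar>s\<bar> + n * (s\<^sup>2 / 6 * expectation (\<lambda>\<omega>. min (6 * (W \<omega>)\<^sup>2) (\<bar>s\<bar> * \<bar>W \<omega>\<bar> ^ 3)))"
proof -
  let ?V = "\<lambda>\<omega>. perp_R Qs Ms n \<omega> - c * (1 - (\<Prod>i\<in>{1..n}. Ms i \<omega>))"
  have tail: "norm ((\<integral>\<omega>. iexp (s * ?V \<omega>) \<partial>M) - (1 - s\<^sup>2 * expectation (\<lambda>\<omega>. (W \<omega>)\<^sup>2) / 2) ^ n)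
      \<le> n * (s\<^sup>2 / 6 * expectation (\<lambda>\<omega>. min (6 * (W \<omega>)\<^sup>2) (\<bar>s\<bar> * \<bar>W \<omega>\<bar> ^ 3)))"
    using norm_char_tail_sum_centred_le[OF small, of n] by (simp add: perp_R_eq_tail_sum[of Qs Ms n _ c])
  have "AE \<omega> in M. (\<Prod>i\<in>{1..n}. Ms i \<omega>) = 1 \<or> (\<Prod>i\<in>{1..n}. Ms i \<omega>) = -1"
    using sign by (intro AE_prod_sign) auto
  then have close: "AE \<omega> in M. \<bar>perp_R Qs Ms n \<omega> - ?V \<omega>\<bar> \<le> 2 * \<bar>c\<bar>"
    by eventually_elim (auto simp: abs_mult)
  have drift: "norm ((\<integral>\<omega>. iexp (s * perp_R Qs Ms n \<omega>) \<partial>M) - (\<integral>\<omega>. iexp (s * ?V \<omega>) \<partial>M))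
      \<le> \<bar>s\<bar> * (2 * \<bar>c\<bar>)"
  proof (rule norm_char_diff_le[OF _ _ close])
    have "(\<lambda>\<omega>. \<Prod>i\<in>{1..n}. Ms i \<omega>) \<in> borel_measurable M"
      by (rule borel_measurable_prod) (simp add: measurable_Ms)
    then show "?V \<in> borel_measurable M"
      by measurable
  qed simp
  show ?thesis
    using norm_diff_triangle_le[OF drift tail] by (simp add: ac_simps)
qed

lemma norm_char_scaled_perp_R_le:
  assumes "1 \<le> n" and large: "expectation (\<lambda>\<omega>. (W \<omega>)\<^sup>2) * t\<^sup>2 \<le> 4 * real n"
  shows "norm (char (distr M borel (\<lambda>\<omega>. perp_R Qs Ms n \<omega> / sqrt n)) t
      - (1 + (- (expectation (\<lambda>\<omega>. (W \<omega>)\<^sup>2) * t\<^sup>2) / 2) / n) ^ n)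
    \<le> 2 * \<bar>c\<bar> * (\<bar>t\<bar> / sqrt n)
      + t\<^sup>2 / 6 * expectation (\<lambda>\<omega>. min (6 * (W \<omega>)\<^sup>2) (\<bar>t\<bar> / sqrt n * \<bar>W \<omega>\<bar> ^ 3))"
proof -
  let ?\<sigma>2 = "expectation (\<lambda>\<omega>. (W \<omega>)\<^sup>2)"
  define s where "s = t / sqrt n"
  have s2: "s\<^sup>2 = t\<^sup>2 / n" and abs_s: "\<bar>s\<bar> = \<bar>t\<bar> / sqrt n"
    using \<open>1 \<le> n\<close> by (simp_all add: s_def power_divide abs_div)
  have char_eq: "char (distr M borel (\<lambda>\<omega>. perp_R Qs Ms n \<omega> / sqrt n)) t
      = (\<integral>\<omega>. iexp (s * perp_R Qs Ms n \<omega>) \<partial>M)"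
    by (simp add: char_def integral_distr s_def)
  have psi_eq: "1 + (- (?\<sigma>2 * t\<^sup>2) / 2) / n = 1 - s\<^sup>2 * ?\<sigma>2 / 2"
    using \<open>1 \<le> n\<close> by (simp add: s2 field_simps)
  have small: "s\<^sup>2 * ?\<sigma>2 \<le> 4"
    using \<open>1 \<le> n\<close> large by (simp add: s2 field_simps)
  have scale: "n * (s\<^sup>2 / 6 * x) = t\<^sup>2 / 6 * x" for x
    using \<open>1 \<le> n\<close> by (simp add: s2)
  show ?thesis
    unfolding char_eq psi_eq
    using norm_char_perp_R_le[OF small, of n] by (simp only: scale abs_s)
qed

theorem perp_R_weak_conv:
  "weak_conv_m (\<lambda>n. distr M borel (\<lambda>\<omega>. perp_R Qs Ms n \<omega> / sqrt n))
     (scaled_std_normal (sqrt (expectation (\<lambda>\<omega>. (W \<omega>)\<^sup>2))))"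
proof (rule levy_continuity)
  let ?\<sigma>2 = "expectation (\<lambda>\<omega>. (W \<omega>)\<^sup>2)"
  show "real_distribution (distr M borel (\<lambda>\<omega>. perp_R Qs Ms n \<omega> / sqrt n))" for n
    by (rule real_distribution_distr) simp
  show "real_distribution (scaled_std_normal (sqrt ?\<sigma>2))"
    by (rule real_distribution_scaled_std_normal)
  fix t
  define err where "err n = 2 * \<bar>c\<bar> * (\<bar>t\<bar> / sqrt n)
    + t\<^sup>2 / 6 * expectation (\<lambda>\<omega>. min (6 * (W \<omega>)\<^sup>2) (\<bar>t\<bar> / sqrt n * \<bar>W \<omega>\<bar> ^ 3))" for n :: nat
  have bound: "\<forall>\<^sub>F n in sequentially. norm (char (distr M borel (\<lambda>\<omega>. perp_R Qs Ms n \<omega> / sqrt n)) t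
      - complex_of_real ((1 + (- (?\<sigma>2 * t\<^sup>2) / 2) / n) ^ n)) \<le> err n"
  proof (rule eventually_sequentiallyI[of "nat \<lceil>?\<sigma>2 * t\<^sup>2\<rceil> + 1"])
    fix n assume n: "nat \<lceil>?\<sigma>2 * t\<^sup>2\<rceil> + 1 \<le> n"
    have "?\<sigma>2 * t\<^sup>2 \<le> real (nat \<lceil>?\<sigma>2 * t\<^sup>2\<rceil>)"
      by (rule real_nat_ceiling_ge)
    also have "\<dots> \<le> 4 * real n"
      using n by linarith
    finally have "?\<sigma>2 * t\<^sup>2 \<le> 4 * real n" .
    with n show "norm (char (distr M borel (\<lambda>\<omega>. perp_R Qs Ms n \<omega> / sqrt n)) t
      - complex_of_real ((1 + (- (?\<sigma>2 * t\<^sup>2) / 2) / n) ^ n)) \<le> err n"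
      unfolding err_def by (intro norm_char_scaled_perp_R_le) simp_all
  qed
  have err_0: "err \<longlonglongrightarrow> 0"
  proof -
    have scale: "(\<lambda>n. \<bar>t\<bar> / sqrt (real n)) \<longlonglongrightarrow> 0"
      by (intro tendsto_divide_0[OF tendsto_const] filterlim_at_top_imp_at_infinity
          filterlim_compose[OF sqrt_at_top filterlim_real_sequentially])
    have "(\<lambda>n. expectation (\<lambda>\<omega>. min (6 * (W \<omega>)\<^sup>2) (\<bar>t\<bar> / sqrt n * \<bar>W \<omega>\<bar> ^ 3))) \<longlonglongrightarrow> 0"
      by (rule tendsto_expectation_min_cube[OF W_measurable W_square_integrable _ scale]) simp
    with scale show ?thesis
      unfolding err_def by (intro tendsto_add_zero tendsto_mult_right_zero)
  qed
  have "(\<lambda>n. complex_of_real ((1 + (- (?\<sigma>2 * t\<^sup>2) / 2) / n) ^ n))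
      \<longlonglongrightarrow> complex_of_real (exp (- (?\<sigma>2 * t\<^sup>2) / 2))"
    by (intro tendsto_of_real tendsto_exp_limit_sequentially)
  then have "(\<lambda>n. char (distr M borel (\<lambda>\<omega>. perp_R Qs Ms n \<omega> / sqrt n)) t)
      \<longlonglongrightarrow> complex_of_real (exp (- (?\<sigma>2 * t\<^sup>2) / 2))"
    by (rule Lim_transform[OF _ Lim_null_comparison[OF bound err_0]])
  moreover have "(sqrt ?\<sigma>2 * t)\<^sup>2 = ?\<sigma>2 * t\<^sup>2"
    by (simp add: power_mult_distrib)
  ultimately show "(\<lambda>n. char (distr M borel (\<lambda>\<omega>. perp_R Qs Ms n \<omega> / sqrt n)) t)
      \<longlonglongrightarrow> char (scaled_std_normal (sqrt ?\<sigma>2)) t"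
    by (simp add: char_scaled_std_normal)
qed

end

theorem theorem4:
  fixes P :: "'a measure"
    and Q M :: "'a \<Rightarrow> real"
    and Qs Ms :: "nat \<Rightarrow> 'a \<Rightarrow> real"
  assumes "prob_space P"
    and "Q \<in> borel_measurable P" and "M \<in> borel_measurable P"
    and M_pm1: "AE x in P. M x = -1 \<or> M x = 1"
    and M_nondeg: "\<not> (\<exists>c. AE x in P. M x = c)"
    and Q2: "integrable P (\<lambda>x. (Q x)\<^sup>2)"
    and indep: "prob_space.indep_vars P (\<lambda>_. borel \<Otimes>\<^sub>M borel) (\<lambda>n x. (Qs n x, Ms n x)) {1..}"
    and ident: "\<And>n. n \<ge> 1 \<Longrightarrow>
       distr P (borel \<Otimes>\<^sub>M borel) (\<lambda>x. (Qs n x, Ms n x)) = distr P (borel \<Otimes>\<^sub>M borel) (\<lambda>x. (Q x, M x))"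
  shows "weak_conv_m (\<lambda>n. distr P borel (\<lambda>x. perp_R Qs Ms n x / sqrt (real n)))
           (scaled_std_normal (sqrt ((\<integral>x. (Q x)\<^sup>2 \<partial>P)
              + 2 * (\<integral>x. Q x \<partial>P) / (1 - (\<integral>x. M x \<partial>P)) * (\<integral>x. Q x * M x \<partial>P))))"
proof -
  interpret prob_space P by fact
  have law: "distr P (borel \<Otimes>\<^sub>M borel) (\<lambda>x. (Qs i x, Ms i x)) = distr P (borel \<Otimes>\<^sub>M borel) (\<lambda>x. (Q x, M x))"
    "(\<lambda>x. (Qs i x, Ms i x)) \<in> measurable P (borel \<Otimes>\<^sub>M borel)"
    "(\<lambda>x. (Q x, M x)) \<in> measurable P (borel \<Otimes>\<^sub>M borel)" if "1 \<le> i" for i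
    using ident[OF that] indep that assms(2,3) by (auto simp: indep_vars_def)
  have EM: "expectation M \<noteq> 1"
    using assms(3) M_pm1 M_nondeg by (rule expectation_sign_ne_1)
  define c where "c = expectation Q / (1 - expectation M)"
  note moments = centred_step_moments[OF assms(2,3) M_pm1 Q2 EM, folded c_def]
  interpret signed_perpetuity P Qs Ms c "\<lambda>x. centred_step c (Q x, M x)"
  proof
    fix i :: nat assume "1 \<le> i"
    have "AE x in P. snd (Qs i x, Ms i x) = 1 \<or> snd (Qs i x, Ms i x) = -1"
      using M_pm1 by (intro AE_of_distr_eq[OF law[OF \<open>1 \<le> i\<close>]]) (measurable, auto elim: eventually_mono)
    then show "AE x in P. Ms i x = 1 \<or> Ms i x = -1"
      by simp
  next
    fix i :: nat and u :: real assume "1 \<le> i"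
    show "(\<integral>x. iexp (u * centred_step c (Qs i x, Ms i x)) \<partial>P) = (\<integral>x. iexp (u * centred_step c (Q x, M x)) \<partial>P)"
      by (rule integral_eq_of_distr_eq[OF law[OF \<open>1 \<le> i\<close>]]) simp
  qed (use indep moments assms(2,3) in simp_all)
  show ?thesis
    using perp_R_weak_conv by (simp only: moments(3))
qed

end
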